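(* Consider the Network Design Problem with $\bar y_a=\infty$ for all $a\in A$, and suppose it has an optimal solution. Then there exist an optimal solution $(x,y)$ and an $s$--$t$ path $P$ in (the underlying undirected graph of) $G$ such that $x_a=0$ and $y_a=0$ for all $a\notin P$.
   Context: Fix $r\ge1$. Let $G=(V,A)$ be a weakly connected directed graph with distinct source $s$ and sink $t$. For $y\in\mathbb{R}_{\ge 0}^A$ let $\operatorname{supp}(y)=\{a: y_a>0\}$, $G'=(V,\operatorname{supp}(y))$ with node-arc incidence matrix $\Gamma'$, and $R^y_{s,t}=\min\{\sum_{a\in\operatorname{supp}(y)} |f_a|^{r+1}/y_a^{r} : \Gamma' f=\mathbf{1}_s-\mathbf{1}_t\}$ ($=\infty$ if $s,t$ are disconnected in $G'$); this is the effective resistance of the network induced by $y$. The Network Design Problem, given $c,\gamma\in\mathbb{R}_{\ge0}^A$, bounds $\bar y\in(\mathbb{R}_{\ge0}\cup\{\infty\})^A$ and $B>0$, is: minimize $\sum_{a\in A}(c_a y_a+\gamma_a x_a)$ over $x\in\{0,1\}^A$, $y\in\mathbb{R}_{\ge0}^A$ subject to $R^y_{s,t}\le B$, $y_a\le \bar y_a$, and $y_a>0\Rightarrow x_a=1$ for all $a$. Arc orientations play no role in paths here. *)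

theory Defs
  imports Complex_Main "HOL-Library.Extended_Real"
begin

definition weakly_connected ::
  "'v set \<Rightarrow> 'a set \<Rightarrow> ('a \<Rightarrow> 'v) \<Rightarrow> ('a \<Rightarrow> 'v) \<Rightarrow> bool" where
  "weakly_connected V A tail head \<longleftrightarrow>
     (\<forall>u\<in>V. \<forall>v\<in>V. (u, v) \<in> ({(tail a, head a) | a. a \<in> A} \<union> {(head a, tail a) | a. a \<in> A})\<^sup>*)"

definition st_flows ::
  "'v set \<Rightarrow> 'a set \<Rightarrow> ('a \<Rightarrow> 'v) \<Rightarrow> ('a \<Rightarrow> 'v) \<Rightarrow> 'v \<Rightarrow> 'v \<Rightarrow> ('a \<Rightarrow> real) \<Rightarrow> ('a \<Rightarrow> real) set" where
  "st_flows V A tail head s t y =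
     {f. (\<forall>a. a \<notin> {a\<in>A. y a > 0} \<longrightarrow> f a = 0) \<and>
         (\<forall>v\<in>V. (\<Sum>a\<in>{a\<in>A. y a > 0 \<and> tail a = v}. f a) - (\<Sum>a\<in>{a\<in>A. y a > 0 \<and> head a = v}. f a)
                 = (if v = s then 1 else if v = t then -1 else 0))}"

text \<open>Effective resistance R^y_{s,t}; the infimum of the empty set is \<infinity>
  (s,t disconnected in G').  When feasible flows exist the infimum is attained.\<close>
definition eff_resistance ::
  "'v set \<Rightarrow> 'a set \<Rightarrow> ('a \<Rightarrow> 'v) \<Rightarrow> ('a \<Rightarrow> 'v) \<Rightarrow> 'v \<Rightarrow> 'v \<Rightarrow> real \<Rightarrow> ('a \<Rightarrow> real) \<Rightarrow> ereal" where
  "eff_resistance V A tail head s t r y =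
     Inf {ereal (\<Sum>a\<in>{a\<in>A. y a > 0}. \<bar>f a\<bar> powr (r + 1) / y a powr r) | f.
            f \<in> st_flows V A tail head s t y}"

definition ndp_feasible ::
  "'v set \<Rightarrow> 'a set \<Rightarrow> ('a \<Rightarrow> 'v) \<Rightarrow> ('a \<Rightarrow> 'v) \<Rightarrow> 'v \<Rightarrow> 'v \<Rightarrow> real \<Rightarrow> ('a \<Rightarrow> ereal) \<Rightarrow> real
   \<Rightarrow> ('a \<Rightarrow> real) \<Rightarrow> ('a \<Rightarrow> real) \<Rightarrow> bool" where
  "ndp_feasible V A tail head s t r ybar B x y \<longleftrightarrow>
     (\<forall>a\<in>A. (x a = 0 \<or> x a = 1) \<and> y a \<ge> 0 \<and> ereal (y a) \<le> ybar a \<and> (y a > 0 \<longrightarrow> x a = 1)) \<and>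
     eff_resistance V A tail head s t r y \<le> ereal B"

definition ndp_cost ::
  "'a set \<Rightarrow> ('a \<Rightarrow> real) \<Rightarrow> ('a \<Rightarrow> real) \<Rightarrow> ('a \<Rightarrow> real) \<Rightarrow> ('a \<Rightarrow> real) \<Rightarrow> real" where
  "ndp_cost A c \<gamma> x y = (\<Sum>a\<in>A. c a * y a + \<gamma> a * x a)"

definition ndp_optimal ::
  "'v set \<Rightarrow> 'a set \<Rightarrow> ('a \<Rightarrow> 'v) \<Rightarrow> ('a \<Rightarrow> 'v) \<Rightarrow> 'v \<Rightarrow> 'v \<Rightarrow> real \<Rightarrow> ('a \<Rightarrow> real) \<Rightarrow> ('a \<Rightarrow> real)
   \<Rightarrow> ('a \<Rightarrow> ereal) \<Rightarrow> real \<Rightarrow> ('a \<Rightarrow> real) \<Rightarrow> ('a \<Rightarrow> real) \<Rightarrow> bool" where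
  "ndp_optimal V A tail head s t r c \<gamma> ybar B x y \<longleftrightarrow>
     ndp_feasible V A tail head s t r ybar B x y \<and>
     (\<forall>x' y'. ndp_feasible V A tail head s t r ybar B x' y' \<longrightarrow> ndp_cost A c \<gamma> x y \<le> ndp_cost A c \<gamma> x' y')"

definition undirected_st_path ::
  "'a set \<Rightarrow> ('a \<Rightarrow> 'v) \<Rightarrow> ('a \<Rightarrow> 'v) \<Rightarrow> 'v \<Rightarrow> 'v \<Rightarrow> 'a set \<Rightarrow> bool" where
  "undirected_st_path A tail head s t P \<longleftrightarrow>
     (\<exists>vs es. length vs = Suc (length es) \<and> List.hd vs = s \<and> last vs = t \<and> distinct vs \<and>
        set es \<subseteq> A \<and> P = set es \<and>
        (\<forall>i<length es. (tail (es ! i) = vs ! i \<and> head (es ! i) = vs ! Suc i) \<or>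
                        (head (es ! i) = vs ! i \<and> tail (es ! i) = vs ! Suc i)))"

end

theory Submission
  imports Defs "HOL-Analysis.Analysis"
begin

(* Take an optimal (x, y) and a unit s-t flow f of minimum energy for y (it exists by
   compactness); its energy is at most B. Weight each arc by w a = c a powr (r/(r+1)). The
   shortest-walk distance to t inside the support of f changes by at most w a across an arc a,
   so testing f against it yields a simple s-t path P in the support of f with
   w(P) <= sum_a |f a| w a. Hoelder's inequality with exponents (r+1)/r and r+1 bounds the latter
   by (sum_a c a y a)^(r/(r+1)) times the energy^(1/(r+1)), and this is exactly what is needed for
   capacities on P proportional to c a powr (-1/(r+1)) to cost no more than y while the unit path
   flow has energy at most B. Arcs of cost zero on P keep the energy share they had under f, and
   opening only the arcs of P does not increase fixed costs. *)

lemma Hoelder_inequality_sum: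
  fixes a b :: "'i \<Rightarrow> real"
  assumes "finite I" "p > 1" "q > 1" "1/p + 1/q = 1" "\<forall>i\<in>I. a i \<ge> 0 \<and> b i \<ge> 0"
  shows "(\<Sum>i\<in>I. a i * b i) \<le> (\<Sum>i\<in>I. a i powr p) powr (1/p) * (\<Sum>i\<in>I. b i powr q) powr (1/q)"
proof -
  define \<alpha> where "\<alpha> = (\<Sum>i\<in>I. a i powr p) powr (1/p)"
  define \<beta> where "\<beta> = (\<Sum>i\<in>I. b i powr q) powr (1/q)"
  have \<alpha>_powr: "\<alpha> powr p = (\<Sum>i\<in>I. a i powr p)" and \<beta>_powr: "\<beta> powr q = (\<Sum>i\<in>I. b i powr q)"
    using assms by (auto simp: \<alpha>_def \<beta>_def powr_powr sum_nonneg)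
  show ?thesis
  proof (cases "\<alpha> = 0 \<or> \<beta> = 0")
    case True
    then have "\<forall>i\<in>I. a i * b i = 0"
      using assms \<alpha>_powr \<beta>_powr by (auto simp: sum_nonneg_eq_0_iff)
    then have "(\<Sum>i\<in>I. a i * b i) = 0"
      by (rule sum.neutral)
    then show ?thesis
      using assms by (simp add: \<alpha>_def \<beta>_def sum_nonneg)
  next
    case False
    then have pos: "\<alpha> > 0" "\<beta> > 0"
      by (auto simp: \<alpha>_def \<beta>_def)
    have "(\<Sum>i\<in>I. a i * b i) / (\<alpha> * \<beta>) = (\<Sum>i\<in>I. (a i / \<alpha>) * (b i / \<beta>))"
      by (simp add: sum_divide_distrib)
    also have "\<dots> \<le> (\<Sum>i\<in>I. (a i / \<alpha>) powr p / p + (b i / \<beta>) powr q / q)"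
      using assms pos by (intro sum_mono Youngs_inequality) auto
    also have "\<dots> = (\<Sum>i\<in>I. a i powr p) / \<alpha> powr p / p + (\<Sum>i\<in>I. b i powr q) / \<beta> powr q / q"
      using assms pos by (simp add: sum.distrib powr_divide sum_divide_distrib)
    also have "\<dots> = 1"
      using assms pos by (simp flip: \<alpha>_powr \<beta>_powr)
    finally show ?thesis
      using pos by (simp add: \<alpha>_def \<beta>_def divide_le_eq mult.commute)
  qed
qed

lemma Hoelder_cost_energy:
  fixes c y F :: "'a \<Rightarrow> real"
  assumes "finite T" "r > 0" "\<forall>a\<in>T. c a \<ge> 0 \<and> y a > 0 \<and> F a \<ge> 0"
  shows "(\<Sum>a\<in>T. F a * c a powr (r/(r+1))) powr (r+1)
           \<le> (\<Sum>a\<in>T. c a * y a) powr r * (\<Sum>a\<in>T. F a powr (r+1) / y a powr r)"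
proof -
  define C where "C = (\<Sum>a\<in>T. c a * y a)"
  define E where "E = (\<Sum>a\<in>T. F a powr (r+1) / y a powr r)"
  have CE: "C \<ge> 0" "E \<ge> 0"
    using assms by (auto simp: C_def E_def intro!: sum_nonneg)
  have "(\<Sum>a\<in>T. F a * c a powr (r/(r+1)))
      = (\<Sum>a\<in>T. (c a * y a) powr (r/(r+1)) * (F a / y a powr (r/(r+1))))"
    using assms by (intro sum.cong) (auto simp: powr_mult)
  also have "\<dots> \<le> (\<Sum>a\<in>T. ((c a * y a) powr (r/(r+1))) powr ((r+1)/r)) powr (1/((r+1)/r))
                  * (\<Sum>a\<in>T. (F a / y a powr (r/(r+1))) powr (r+1)) powr (1/(r+1))"
    using assms by (intro Hoelder_inequality_sum) (auto simp: field_simps)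
  also have "(\<Sum>a\<in>T. ((c a * y a) powr (r/(r+1))) powr ((r+1)/r)) = C"
    using assms unfolding C_def by (intro sum.cong) (auto simp: powr_powr)
  also have "(\<Sum>a\<in>T. (F a / y a powr (r/(r+1))) powr (r+1)) = E"
    using assms unfolding E_def by (intro sum.cong) (auto simp: powr_powr powr_divide)
  finally have "(\<Sum>a\<in>T. F a * c a powr (r/(r+1))) powr (r+1) \<le> (C powr (1/((r+1)/r)) * E powr (1/(r+1))) powr (r+1)"
    using assms by (intro powr_mono2) (auto intro!: sum_nonneg)
  also have "\<dots> = C powr r * E"
    using assms CE by (simp add: powr_mult powr_powr)
  finally show ?thesis
    by (simp add: C_def E_def)
qed

lemma Hoelder_cost_energy_costly_arcs:
  fixes c y F :: "'a \<Rightarrow> real"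
  assumes "finite T" "r > 0" and nonneg: "\<forall>a\<in>T. c a \<ge> 0 \<and> y a > 0 \<and> F a \<ge> 0"
  shows "(\<Sum>a\<in>T. F a * c a powr (r/(r+1))) powr (r+1)
           \<le> (\<Sum>a\<in>T. c a * y a) powr r * (\<Sum>a\<in>{a\<in>T. c a > 0}. F a powr (r+1) / y a powr r)"
proof -
  let ?Tc = "{a\<in>T. c a > 0}"
  have free: "c a = 0" if "a \<in> T - ?Tc" for a
    using that nonneg by force
  have "(\<Sum>a\<in>T. F a * c a powr (r/(r+1))) = (\<Sum>a\<in>?Tc. F a * c a powr (r/(r+1)))"
    using assms(1) free by (intro sum.mono_neutral_right) auto
  moreover have "(\<Sum>a\<in>T. c a * y a) = (\<Sum>a\<in>?Tc. c a * y a)"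
    using assms(1) free by (intro sum.mono_neutral_right) auto
  ultimately show ?thesis
    using Hoelder_cost_energy[of ?Tc r c y F] assms by simp
qed

lemma capacities_proportional_to_costs:
  fixes c :: "'a \<Rightarrow> real"
  assumes "r > 0" "k > 0" "\<forall>a\<in>Q. c a > 0"
  shows "(\<Sum>a\<in>Q. c a * (k * c a powr (-1/(r+1)))) = k * (\<Sum>a\<in>Q. c a powr (r/(r+1)))"
    and "(\<Sum>a\<in>Q. 1 / (k * c a powr (-1/(r+1))) powr r) = (\<Sum>a\<in>Q. c a powr (r/(r+1))) / k powr r"
proof -
  have "c a * c a powr (-1/(r+1)) = c a powr (r/(r+1))" if "c a > 0" for a
  proof -
    have "c a * c a powr (-1/(r+1)) = c a powr (1 + -1/(r+1))"
      using that powr_add[of "c a" 1 "-1/(r+1)"] by simp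
    also have "1 + -1/(r+1) = r/(r+1)"
      using assms by (simp add: field_simps)
    finally show ?thesis .
  qed
  then show "(\<Sum>a\<in>Q. c a * (k * c a powr (-1/(r+1)))) = k * (\<Sum>a\<in>Q. c a powr (r/(r+1)))"
    using assms by (simp add: sum_distrib_left mult.left_commute)
  have "1 / (k * c a powr (-1/(r+1))) powr r = c a powr (r/(r+1)) / k powr r" if "c a > 0" for a
  proof -
    have "(k * c a powr (-1/(r+1))) powr r = k powr r * c a powr (- (r/(r+1)))"
      using assms that by (simp add: powr_mult powr_powr)
    then show ?thesis
      using assms that by (simp add: powr_minus field_simps)
  qed
  then show "(\<Sum>a\<in>Q. 1 / (k * c a powr (-1/(r+1))) powr r) = (\<Sum>a\<in>Q. c a powr (r/(r+1))) / k powr r"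
    using assms by (simp add: sum_divide_distrib)
qed

lemma costly_capacities_exist:
  fixes c :: "'a \<Rightarrow> real"
  assumes "r > 0" "\<forall>a\<in>Q. c a > 0" "C \<ge> 0" "E \<ge> 0"
    and hoelder: "(\<Sum>a\<in>Q. c a powr (r/(r+1))) powr (r+1) \<le> C powr r * E"
  shows "\<exists>z. (\<forall>a\<in>Q. z a > 0) \<and> (\<Sum>a\<in>Q. 1 / z a powr r) \<le> E \<and> (\<Sum>a\<in>Q. c a * z a) \<le> C"
proof -
  define W where "W = (\<Sum>a\<in>Q. c a powr (r/(r+1)))"
  have "W \<ge> 0"
    unfolding W_def by (intro sum_nonneg) auto
  \<comment> \<open>k = C / W spends the whole budget; the Hoelder bound is then exactly the energy bound.\<close>
  obtain k where k: "k > 0" "k * W \<le> C" "W / k powr r \<le> E"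
  proof (cases "W = 0")
    case True
    then show ?thesis
      using that[of 1] assms(3,4) by simp
  next
    case False
    with \<open>W \<ge> 0\<close> have "W > 0"
      by simp
    then have "0 < W powr (r+1)"
      by simp
    also have "\<dots> \<le> C powr r * E"
      using hoelder by (simp add: W_def)
    finally have "C > 0"
      using assms(3) by (cases "C = 0") auto
    have "W / (C / W) powr r = W powr (r+1) / C powr r"
      using \<open>W > 0\<close> \<open>C > 0\<close> by (simp add: powr_divide powr_add)
    also have "\<dots> \<le> E"
      using hoelder \<open>C > 0\<close> by (simp add: W_def divide_le_eq mult.commute)
    finally show ?thesis
      using that[of "C / W"] \<open>W > 0\<close> \<open>C > 0\<close> by simp
  qed
  then show ?thesis
    using capacities_proportional_to_costs[OF assms(1) k(1) assms(2)] W_def \<open>W \<ge> 0\<close> assms(2)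
    by (intro exI[of _ "\<lambda>a. k * c a powr (-1/(r+1))"]) auto
qed

lemma path_capacities_exist:
  fixes c y F :: "'a \<Rightarrow> real"
  assumes "finite T" "P \<subseteq> T" "r > 0"
    and nonneg: "\<forall>a\<in>T. c a \<ge> 0 \<and> y a > 0 \<and> F a \<ge> 0" and F_pos: "\<forall>a\<in>P. F a > 0"
    and weight: "(\<Sum>a\<in>P. c a powr (r/(r+1))) \<le> (\<Sum>a\<in>T. F a * c a powr (r/(r+1)))"
    and energy: "(\<Sum>a\<in>T. F a powr (r+1) / y a powr r) \<le> B"
  shows "\<exists>z. (\<forall>a\<in>P. z a > 0) \<and> (\<Sum>a\<in>P. 1 / z a powr r) \<le> B \<and> (\<Sum>a\<in>P. c a * z a) \<le> (\<Sum>a\<in>T. c a * y a)"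
proof -
  define Tc where "Tc = {a\<in>T. c a > 0}"
  define energy_on where "energy_on S = (\<Sum>a\<in>S. F a powr (r+1) / y a powr r)" for S
  have free: "c a = 0" if "a \<in> T - Tc" for a
    using that nonneg by (auto simp: Tc_def)
  have "finite P"
    using assms(1,2) by (rule finite_subset[rotated])
  have "(\<Sum>a\<in>P \<inter> Tc. c a powr (r/(r+1))) = (\<Sum>a\<in>P. c a powr (r/(r+1)))"
    using \<open>finite P\<close> free assms(2) by (intro sum.mono_neutral_left) auto
  with weight have "(\<Sum>a\<in>P \<inter> Tc. c a powr (r/(r+1))) powr (r+1) \<le> (\<Sum>a\<in>T. F a * c a powr (r/(r+1))) powr (r+1)"
    using assms(3) by (intro powr_mono2[rotated 2]) (auto intro: sum_nonneg)
  also have "\<dots> \<le> (\<Sum>a\<in>T. c a * y a) powr r * energy_on Tc"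
    unfolding energy_on_def Tc_def by (rule Hoelder_cost_energy_costly_arcs[OF assms(1,3) nonneg])
  finally have "\<exists>z. (\<forall>a\<in>P \<inter> Tc. z a > 0) \<and> (\<Sum>a\<in>P \<inter> Tc. 1 / z a powr r) \<le> energy_on Tc \<and>
      (\<Sum>a\<in>P \<inter> Tc. c a * z a) \<le> (\<Sum>a\<in>T. c a * y a)"
    using nonneg by (intro costly_capacities_exist[OF assms(3)]) (auto simp: Tc_def energy_on_def intro!: sum_nonneg)
  then obtain z\<^sub>c where z\<^sub>c: "\<forall>a\<in>P \<inter> Tc. z\<^sub>c a > 0" "(\<Sum>a\<in>P \<inter> Tc. 1 / z\<^sub>c a powr r) \<le> energy_on Tc"
    "(\<Sum>a\<in>P \<inter> Tc. c a * z\<^sub>c a) \<le> (\<Sum>a\<in>T. c a * y a)"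
    by blast
  \<comment> \<open>On a free arc this capacity reproduces the energy term of F under y.\<close>
  define z where "z a = (if a \<in> Tc then z\<^sub>c a else y a / F a powr ((r+1)/r))" for a
  have free_resistance: "1 / z a powr r = F a powr (r+1) / y a powr r" if "a \<in> P - Tc" for a
    using that assms(2,3) F_pos nonneg by (auto simp: z_def powr_divide powr_powr)
  have "(\<Sum>a\<in>P. 1 / z a powr r) = (\<Sum>a\<in>P \<inter> Tc. 1 / z a powr r) + (\<Sum>a\<in>P - Tc. 1 / z a powr r)"
    by (rule sum.Int_Diff[OF \<open>finite P\<close>])
  also have "\<dots> = (\<Sum>a\<in>P \<inter> Tc. 1 / z\<^sub>c a powr r) + energy_on (P - Tc)"
    unfolding energy_on_def using free_resistance by (simp add: z_def)
  also have "\<dots> \<le> energy_on Tc + energy_on (T - Tc)"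
    using z\<^sub>c(2) assms(1,2) nonneg unfolding energy_on_def by (intro add_mono sum_mono2) auto
  also have "\<dots> \<le> B"
    using energy sum.subset_diff[of Tc T "\<lambda>a. F a powr (r+1) / y a powr r"] assms(1) by (simp add: energy_on_def Tc_def)
  moreover have "(\<Sum>a\<in>P. c a * z a) = (\<Sum>a\<in>P \<inter> Tc. c a * z\<^sub>c a)"
    using \<open>finite P\<close> free assms(2) by (intro sum.mono_neutral_cong_right) (auto simp: z_def)
  moreover have "\<forall>a\<in>P. z a > 0"
    using z\<^sub>c(1) F_pos nonneg assms(2) by (force simp: z_def)
  ultimately show ?thesis
    using z\<^sub>c(3) by auto
qed

definition flow_energy :: "'a set \<Rightarrow> real \<Rightarrow> ('a \<Rightarrow> real) \<Rightarrow> ('a \<Rightarrow> real) \<Rightarrow> real" where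
  "flow_energy A r y f = (\<Sum>a\<in>{a\<in>A. y a > 0}. \<bar>f a\<bar> powr (r + 1) / y a powr r)"

lemma eff_resistance_eq_Inf_flow_energy:
  "eff_resistance V A tail head s t r y
     = (INF f\<in>st_flows V A tail head s t y. ereal (flow_energy A r y f))"
  unfolding eff_resistance_def flow_energy_def by (simp add: image_def Setcompr_eq_image)

lemma eff_resistance_le_flow_energy:
  "f \<in> st_flows V A tail head s t y \<Longrightarrow> eff_resistance V A tail head s t r y \<le> ereal (flow_energy A r y f)"
  unfolding eff_resistance_eq_Inf_flow_energy by (rule INF_lower)

lemma continuous_on_flow_energy:
  assumes "r \<ge> 0"
  shows "continuous_on UNIV (flow_energy A r y)"
  unfolding flow_energy_def
proof (intro continuous_on_sum continuous_on_divide continuous_on_const)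
  fix a assume "a \<in> {a\<in>A. y a > 0}"
  then show "\<forall>x\<in>UNIV. y a powr r \<noteq> 0"
    by auto
  show "continuous_on UNIV (\<lambda>x::'a\<Rightarrow>real. \<bar>x a\<bar> powr (r + 1))"
    by (rule continuous_on_powr')
       (auto intro!: continuous_intros continuous_on_product_coordinates simp: assms add_nonneg_pos)
qed

lemma closed_st_flows: "closed (st_flows V A tail head s t y)"
proof -
  let ?net = "\<lambda>v (f::'a\<Rightarrow>real). (\<Sum>a\<in>{a\<in>A. y a > 0 \<and> tail a = v}. f a) - (\<Sum>a\<in>{a\<in>A. y a > 0 \<and> head a = v}. f a)"
  let ?demand = "\<lambda>v. if v = s then 1 else if v = t then -1 else (0::real)"
  have "st_flows V A tail head s t y
      = (\<Inter>a\<in>-{a\<in>A. y a > 0}. {f. f a = 0}) \<inter> (\<Inter>v\<in>V. {f. ?net v f = ?demand v})"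
    unfolding st_flows_def by (auto; metis (no_types, lifting) eq_iff_diff_eq_0)
  moreover have "closed (\<Inter>a\<in>-{a\<in>A. y a > 0}. {f::'a\<Rightarrow>real. f a = 0})"
    by (intro closed_INT ballI closed_Collect_eq continuous_on_product_coordinates continuous_on_const)
  moreover have "closed (\<Inter>v\<in>V. {f. ?net v f = ?demand v})"
    by (intro closed_INT ballI closed_Collect_eq continuous_on_diff continuous_on_sum
        continuous_on_product_coordinates continuous_on_const)
  ultimately show ?thesis
    by (simp add: closed_Int)
qed

lemma compact_st_flows_energy_sublevel:
  assumes "finite A" "r \<ge> 0"
  shows "compact (st_flows V A tail head s t y \<inter> {g. flow_energy A r y g \<le> M})"
proof -
  let ?S = "{a\<in>A. y a > 0}"
  let ?T = "st_flows V A tail head s t y \<inter> {g. flow_energy A r y g \<le> M}"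
  define K where "K a = (M * y a powr r) powr (1/(r+1))" for a
  define box where "box = PiE UNIV (\<lambda>a. if a \<in> ?S then {-K a..K a} else {0::real})"
  have "compactin (product_topology (\<lambda>i. euclidean) UNIV) box"
    unfolding box_def compactin_PiE by auto
  then have "compact box"
    by (simp add: euclidean_product_topology)
  moreover have "closed ?T"
    by (intro closed_Int closed_st_flows closed_Collect_le continuous_on_flow_energy assms(2) continuous_on_const)
  moreover have "?T \<subseteq> box"
  proof
    fix g assume g: "g \<in> ?T"
    have "g a \<in> (if a \<in> ?S then {-K a..K a} else {0})" for a
    proof (cases "a \<in> ?S")
      case True
      have "\<bar>g a\<bar> powr (r + 1) / y a powr r \<le> flow_energy A r y g"
        unfolding flow_energy_def using True assms(1) by (intro member_le_sum) auto
      also have "\<dots> \<le> M"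
        using g by auto
      finally have "\<bar>g a\<bar> powr (r + 1) \<le> M * y a powr r"
        using True by (simp add: divide_le_eq)
      then have "(\<bar>g a\<bar> powr (r + 1)) powr (1/(r+1)) \<le> K a"
        unfolding K_def using assms(2) by (intro powr_mono2) auto
      then show ?thesis
        using True assms(2) by (simp add: powr_powr abs_le_iff)
    next
      case False
      then show ?thesis
        using g unfolding st_flows_def by auto
    qed
    then show "g \<in> box"
      unfolding box_def by auto
  qed
  ultimately show ?thesis
    by (metis compact_Int_closed Int_absorb1)
qed

lemma flow_energy_minimizer_exists:
  assumes "finite A" "r \<ge> 0" "st_flows V A tail head s t y \<noteq> {}"
  shows "\<exists>f\<in>st_flows V A tail head s t y. \<forall>g\<in>st_flows V A tail head s t y. flow_energy A r y f \<le> flow_energy A r y g"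
proof -
  let ?F = "st_flows V A tail head s t y"
  obtain f0 where f0: "f0 \<in> ?F"
    using assms by auto
  let ?T = "?F \<inter> {g. flow_energy A r y g \<le> flow_energy A r y f0}"
  have "?T \<noteq> {}"
    using f0 by auto
  moreover have "continuous_on ?T (flow_energy A r y)"
    using continuous_on_flow_energy[OF assms(2)] by (rule continuous_on_subset) simp
  ultimately have "\<exists>f\<in>?T. \<forall>g\<in>?T. flow_energy A r y f \<le> flow_energy A r y g"
    by (rule continuous_attains_inf[OF compact_st_flows_energy_sublevel[OF assms(1,2)]])
  then obtain f where f: "f \<in> ?T" "\<forall>g\<in>?T. flow_energy A r y f \<le> flow_energy A r y g"
    by blast
  show ?thesis
  proof (intro bexI[of _ f] ballI)
    fix g assume "g \<in> ?F"
    then show "flow_energy A r y f \<le> flow_energy A r y g"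
      using f by (cases "flow_energy A r y g \<le> flow_energy A r y f0") auto
  qed (use f in auto)
qed

lemma eff_resistance_attained:
  assumes "finite A" "r \<ge> 0" "eff_resistance V A tail head s t r y \<noteq> \<infinity>"
  shows "\<exists>f\<in>st_flows V A tail head s t y. eff_resistance V A tail head s t r y = ereal (flow_energy A r y f)"
proof -
  let ?F = "st_flows V A tail head s t y"
  have "?F \<noteq> {}"
    using assms(3) by (metis INF_empty eff_resistance_eq_Inf_flow_energy top_ereal_def)
  then have "\<exists>f\<in>?F. \<forall>g\<in>?F. flow_energy A r y f \<le> flow_energy A r y g"
    by (rule flow_energy_minimizer_exists[OF assms(1,2)])
  then obtain f where f: "f \<in> ?F" and min: "\<forall>g\<in>?F. flow_energy A r y f \<le> flow_energy A r y g"
    by blast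
  have "ereal (flow_energy A r y f) \<le> eff_resistance V A tail head s t r y"
    unfolding eff_resistance_eq_Inf_flow_energy using min by (intro INF_greatest) simp
  with f eff_resistance_le_flow_energy[OF f] show ?thesis
    by (metis antisym)
qed

lemma flow_energy_le_of_eff_resistance_le:
  assumes "finite A" "r \<ge> 0" "eff_resistance V A tail head s t r y \<le> ereal B"
  shows "\<exists>f\<in>st_flows V A tail head s t y. flow_energy A r y f \<le> B"
proof -
  have "eff_resistance V A tail head s t r y \<noteq> \<infinity>"
    using assms(3) by auto
  then show ?thesis
    using eff_resistance_attained[OF assms(1,2)] assms(3) by fastforce
qed

lemma st_flow_potential_drop:
  assumes f: "f \<in> st_flows V A tail head s t y" and fin: "finite A" "finite V"
    and ends: "\<forall>a\<in>A. tail a \<in> V \<and> head a \<in> V" and st: "s \<in> V" "t \<in> V" "s \<noteq> t"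
  shows "(\<Sum>a\<in>{a\<in>A. y a > 0}. f a * (p (tail a) - p (head a))) = p s - p t"
proof -
  let ?S = "{a\<in>A. y a > 0}"
  have finS: "finite ?S"
    using fin by auto
  have group: "(\<Sum>a\<in>?S. f a * p (endpt a)) = (\<Sum>v\<in>V. p v * (\<Sum>a\<in>{a\<in>A. y a > 0 \<and> endpt a = v}. f a))"
    if "\<forall>a\<in>A. endpt a \<in> V" for endpt
  proof -
    have "(\<Sum>a\<in>?S. f a * p (endpt a)) = (\<Sum>v\<in>V. \<Sum>a\<in>{a\<in>?S. endpt a = v}. f a * p (endpt a))"
      using sum.group[OF finS fin(2), of endpt "\<lambda>a. f a * p (endpt a)"] that by (simp add: image_subset_iff)
    also have "\<dots> = (\<Sum>v\<in>V. p v * (\<Sum>a\<in>{a\<in>A. y a > 0 \<and> endpt a = v}. f a))"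
      by (intro sum.cong refl) (auto simp: sum_distrib_left mult.commute intro!: sum.cong)
    finally show ?thesis .
  qed
  have "(\<Sum>a\<in>?S. f a * (p (tail a) - p (head a))) = (\<Sum>a\<in>?S. f a * p (tail a)) - (\<Sum>a\<in>?S. f a * p (head a))"
    by (simp add: right_diff_distrib sum_subtractf)
  also have "\<dots> = (\<Sum>v\<in>V. p v * ((\<Sum>a\<in>{a\<in>A. y a > 0 \<and> tail a = v}. f a) - (\<Sum>a\<in>{a\<in>A. y a > 0 \<and> head a = v}. f a)))"
    using ends by (simp add: group right_diff_distrib sum_subtractf)
  also have "\<dots> = (\<Sum>v\<in>V. p v * (if v = s then 1 else if v = t then -1 else 0))"
    using f unfolding st_flows_def by (intro sum.cong refl) auto
  also have "\<dots> = (\<Sum>v\<in>V. (if v = s then p s else 0) - (if v = t then p t else 0))"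
    using st by (intro sum.cong refl) auto
  also have "\<dots> = p s - p t"
    using st fin by (simp add: sum_subtractf)
  finally show ?thesis .
qed

lemma st_flow_potential_drop_le:
  assumes f: "f \<in> st_flows V A tail head s t y" and "finite A" "finite V"
    and "\<forall>a\<in>A. tail a \<in> V \<and> head a \<in> V" and "s \<in> V" "t \<in> V" "s \<noteq> t"
    and lipschitz: "\<forall>a\<in>A. f a \<noteq> 0 \<longrightarrow> \<bar>p (tail a) - p (head a)\<bar> \<le> w a"
  shows "p s - p t \<le> (\<Sum>a\<in>{a\<in>A. y a > 0}. \<bar>f a\<bar> * w a)"
proof -
  have "p s - p t = (\<Sum>a\<in>{a\<in>A. y a > 0}. f a * (p (tail a) - p (head a)))"
    using st_flow_potential_drop[OF assms(1-7)] by simp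
  also have "\<dots> \<le> (\<Sum>a\<in>{a\<in>A. y a > 0}. \<bar>f a\<bar> * w a)"
  proof (rule sum_mono)
    fix a assume "a \<in> {a\<in>A. y a > 0}"
    then have "f a \<noteq> 0 \<Longrightarrow> \<bar>p (tail a) - p (head a)\<bar> \<le> w a"
      using lipschitz by auto
    then have "\<bar>f a\<bar> * \<bar>p (tail a) - p (head a)\<bar> \<le> \<bar>f a\<bar> * w a"
      by (cases "f a = 0") (auto intro: mult_left_mono)
    then show "f a * (p (tail a) - p (head a)) \<le> \<bar>f a\<bar> * w a"
      by (metis abs_ge_self abs_mult order_trans)
  qed
  finally show ?thesis .
qed

definition joins :: "('a \<Rightarrow> 'v) \<Rightarrow> ('a \<Rightarrow> 'v) \<Rightarrow> 'a \<Rightarrow> 'v \<Rightarrow> 'v \<Rightarrow> bool" where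
  "joins tail head a u v \<longleftrightarrow> (tail a = u \<and> head a = v) \<or> (head a = u \<and> tail a = v)"

lemma joins_sym: "joins tail head a u v \<longleftrightarrow> joins tail head a v u"
  by (auto simp: joins_def)

inductive walk :: "'a set \<Rightarrow> ('a \<Rightarrow> 'v) \<Rightarrow> ('a \<Rightarrow> 'v) \<Rightarrow> 'v \<Rightarrow> 'v \<Rightarrow> 'v list \<Rightarrow> 'a list \<Rightarrow> bool"
  for S tail head where
  refl: "walk S tail head u u [u] []"
| step: "a \<in> S \<Longrightarrow> joins tail head a u v \<Longrightarrow> walk S tail head v w vs es \<Longrightarrow> walk S tail head u w (u # vs) (a # es)"

lemma walk_hd: "walk S tail head u w vs es \<Longrightarrow> vs \<noteq> [] \<and> hd vs = u"
  by (induction rule: walk.induct) auto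

lemma walk_nth:
  "walk S tail head u w vs es \<Longrightarrow> length vs = Suc (length es) \<and> hd vs = u \<and> last vs = w \<and> set es \<subseteq> S \<and>
     (\<forall>i<length es. joins tail head (es ! i) (vs ! i) (vs ! Suc i))"
proof (induction rule: walk.induct)
  case (step a u v w vs es)
  have "vs \<noteq> []" "hd vs = v"
    using walk_hd[OF step(3)] by auto
  then show ?case
    using step by (auto simp: nth_Cons' less_Suc_eq_0_disj hd_conv_nth)
qed auto

lemma walk_arc_ends_in_vertices:
  "walk S tail head u w vs es \<Longrightarrow> b \<in> set es \<Longrightarrow> tail b \<in> set vs \<and> head b \<in> set vs"
proof (induction rule: walk.induct)
  case (step a u v w vs es)
  have "v \<in> set vs"
    using walk_hd[OF step(3)] by (cases vs) auto
  then show ?case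
    using step by (auto simp: joins_def)
qed auto

lemma walk_distinct_arcs: "walk S tail head u w vs es \<Longrightarrow> distinct vs \<Longrightarrow> distinct es"
proof (induction rule: walk.induct)
  case (step a u v w vs es)
  have "a \<notin> set es"
  proof
    assume "a \<in> set es"
    then have "tail a \<in> set vs \<and> head a \<in> set vs"
      using walk_arc_ends_in_vertices[OF step(3)] by auto
    moreover have "tail a = u \<or> head a = u"
      using step(2) by (auto simp: joins_def)
    ultimately show False
      using step(5) by auto
  qed
  then show ?case
    using step by auto
qed auto

lemma walk_suffix:
  assumes "walk S tail head u w vs es" "vs = xs @ z # ys" "\<forall>b. wt b \<ge> (0::real)"
  shows "\<exists>es'. walk S tail head z w (z # ys) es' \<and> sum_list (map wt es') \<le> sum_list (map wt es)"
  using assms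
proof (induction arbitrary: xs rule: walk.induct)
  case (refl u)
  then show ?case
    by (cases xs) (auto intro: walk.refl)
next
  case (step a u v w vs es)
  show ?case
  proof (cases xs)
    case Nil
    then show ?thesis
      using step by (auto intro: walk.step)
  next
    case (Cons x xs')
    then obtain es' where "walk S tail head z w (z # ys) es'" "sum_list (map wt es') \<le> sum_list (map wt es)"
      using step by auto
    moreover have "wt a \<ge> 0"
      using step by auto
    ultimately show ?thesis
      by (intro exI[of _ es']) auto
  qed
qed

lemma walk_shortcut_to_simple:
  assumes "walk S tail head u w vs es" "\<forall>b. wt b \<ge> (0::real)"
  shows "\<exists>vs' es'. walk S tail head u w vs' es' \<and> distinct vs' \<and> sum_list (map wt es') \<le> sum_list (map wt es)"
  using assms
proof (induction rule: walk.induct)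
  case (refl u)
  show ?case
    by (intro exI[of _ "[u]"] exI[of _ "[]"]) (auto intro: walk.refl)
next
  case (step a u v w vs es)
  obtain vs' es' where simple: "walk S tail head v w vs' es'" "distinct vs'" "sum_list (map wt es') \<le> sum_list (map wt es)"
    using step by auto
  have "wt a \<ge> 0"
    using step by auto
  show ?case
  proof (cases "u \<in> set vs'")
    case False
    then show ?thesis
      using simple \<open>wt a \<ge> 0\<close> step(1,2)
      by (intro exI[of _ "u # vs'"] exI[of _ "a # es'"]) (auto intro: walk.step)
  next
    case True
    then obtain xs ys where split: "vs' = xs @ u # ys"
      by (meson split_list)
    then obtain es'' where "walk S tail head u w (u # ys) es''" "sum_list (map wt es'') \<le> sum_list (map wt es')"
      using walk_suffix[OF simple(1) split] step.prems by auto
    moreover have "distinct (u # ys)"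
      using simple(2) split by auto
    ultimately show ?thesis
      using simple \<open>wt a \<ge> 0\<close> by (intro exI[of _ "u # ys"] exI[of _ es'']) auto
  qed
qed

lemma shortest_walk_exists:
  assumes "finite S" "walk S tail head u w vs es" "\<forall>b. wt b \<ge> (0::real)"
  shows "\<exists>vs' es'. walk S tail head u w vs' es' \<and> distinct vs' \<and>
           (\<forall>vs es. walk S tail head u w vs es \<longrightarrow> sum_list (map wt es') \<le> sum_list (map wt es))"
proof -
  define lengths where "lengths = {sum_list (map wt es) | vs es. walk S tail head u w vs es \<and> distinct vs}"
  have "lengths \<subseteq> (\<lambda>es. sum_list (map wt es)) ` {es. set es \<subseteq> S \<and> distinct es}"
  proof
    fix l assume "l \<in> lengths"
    then obtain vs es where walk: "walk S tail head u w vs es" "distinct vs" and l: "l = sum_list (map wt es)"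
      unfolding lengths_def by blast
    have "set es \<subseteq> S" "distinct es"
      using walk_nth[OF walk(1)] walk_distinct_arcs[OF walk] by auto
    with l show "l \<in> (\<lambda>es. sum_list (map wt es)) ` {es. set es \<subseteq> S \<and> distinct es}"
      by blast
  qed
  then have "finite lengths"
    using finite_subset_distinct[OF assms(1)] by (meson finite_imageI finite_subset)
  moreover have "lengths \<noteq> {}"
    using walk_shortcut_to_simple[OF assms(2,3)] unfolding lengths_def by blast
  ultimately have "Min lengths \<in> lengths"
    by (rule Min_in)
  then obtain vs' es' where shortest: "walk S tail head u w vs' es'" "distinct vs'" "sum_list (map wt es') = Min lengths"
    unfolding lengths_def by auto
  have "sum_list (map wt es') \<le> sum_list (map wt es)" if other: "walk S tail head u w vs es" for vs es
  proof -
    obtain vs'' es'' where "walk S tail head u w vs'' es''" "distinct vs''" "sum_list (map wt es'') \<le> sum_list (map wt es)"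
      using walk_shortcut_to_simple[OF other assms(3)] by blast
    moreover from this have "Min lengths \<le> sum_list (map wt es'')"
      using \<open>finite lengths\<close> unfolding lengths_def by (intro Min_le) auto
    ultimately show ?thesis
      using shortest(3) by simp
  qed
  with shortest show ?thesis
    by blast
qed

definition walk_dist :: "'a set \<Rightarrow> ('a \<Rightarrow> 'v) \<Rightarrow> ('a \<Rightarrow> 'v) \<Rightarrow> ('a \<Rightarrow> real) \<Rightarrow> 'v \<Rightarrow> 'v \<Rightarrow> real" where
  "walk_dist S tail head wt u v = Inf {sum_list (map wt es) | vs es. walk S tail head u v vs es}"

lemma walk_dist_le:
  assumes "\<forall>b. wt b \<ge> 0" "walk S tail head u v vs es"
  shows "walk_dist S tail head wt u v \<le> sum_list (map wt es)"
  unfolding walk_dist_def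
proof (rule cInf_lower)
  show "bdd_below {sum_list (map wt es) | vs es. walk S tail head u v vs es}"
    using assms(1) by (intro bdd_belowI[of _ 0]) (auto intro!: sum_list_nonneg)
qed (use assms(2) in blast)

lemma walk_dist_refl:
  assumes "\<forall>b. wt b \<ge> 0"
  shows "walk_dist S tail head wt v v = 0"
proof -
  have "walk_dist S tail head wt v v \<le> 0"
    using walk_dist_le[OF assms walk.refl] by simp
  moreover have "walk_dist S tail head wt v v \<ge> 0"
    unfolding walk_dist_def using assms walk.refl[of S tail head v]
    by (intro cInf_greatest) (auto intro!: sum_list_nonneg)
  ultimately show ?thesis
    by simp
qed

lemma walk_dist_step:
  assumes "\<forall>b. wt b \<ge> 0" "a \<in> S" "joins tail head a u v"
  shows "walk_dist S tail head wt u t \<le> wt a + walk_dist S tail head wt v t"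
proof -
  let ?L = "\<lambda>x. {sum_list (map wt es) | vs es. walk S tail head x t vs es}"
  show ?thesis
  proof (cases "?L v = {}")
    case True
    \<comment> \<open>Then t is unreachable from u as well, and both distances are the junk value Inf {}.\<close>
    have "?L u = {}"
      using True walk.step[OF assms(2) iffD1[OF joins_sym assms(3)]] by blast
    with True show ?thesis
      using assms(1) by (simp add: walk_dist_def)
  next
    case False
    have "walk_dist S tail head wt u t - wt a \<le> walk_dist S tail head wt v t"
      unfolding walk_dist_def[of _ _ _ _ v]
    proof (rule cInf_greatest[OF False])
      fix l assume "l \<in> ?L v"
      then obtain vs es where "walk S tail head v t vs es" "l = sum_list (map wt es)"
        by blast
      then show "walk_dist S tail head wt u t - wt a \<le> l"
        using walk_dist_le[OF assms(1) walk.step[OF assms(2,3)]] by fastforce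
    qed
    then show ?thesis
      by simp
  qed
qed

lemma walk_dist_arc:
  assumes "\<forall>b. wt b \<ge> 0" "a \<in> S"
  shows "\<bar>walk_dist S tail head wt (tail a) t - walk_dist S tail head wt (head a) t\<bar> \<le> wt a"
proof -
  have "joins tail head a (tail a) (head a)" "joins tail head a (head a) (tail a)"
    by (auto simp: joins_def)
  from walk_dist_step[OF assms this(1), of t] walk_dist_step[OF assms this(2), of t] show ?thesis
    by (simp add: abs_le_iff)
qed

lemma st_flow_support_connected:
  assumes f: "f \<in> st_flows V A tail head s t y" and "finite A" "finite V"
    and "\<forall>a\<in>A. tail a \<in> V \<and> head a \<in> V" and "s \<in> V" "t \<in> V" "s \<noteq> t"
  shows "\<exists>vs es. walk {a\<in>A. f a \<noteq> 0} tail head s t vs es"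
proof (rule ccontr)
  let ?S = "{a\<in>A. f a \<noteq> 0}"
  assume unreachable: "\<nexists>vs es. walk ?S tail head s t vs es"
  define p where "p v = (if \<exists>vs es. walk ?S tail head v t vs es then 0 else (1::real))" for v
  have "p (tail a) = p (head a)" if "a \<in> ?S" for a
  proof -
    have "joins tail head a (tail a) (head a)" "joins tail head a (head a) (tail a)"
      by (auto simp: joins_def)
    from walk.step[OF that this(1)] walk.step[OF that this(2)] show ?thesis
      unfolding p_def by meson
  qed
  then have "p s - p t \<le> (\<Sum>a\<in>{a\<in>A. y a > 0}. \<bar>f a\<bar> * 0)"
    by (intro st_flow_potential_drop_le[OF assms]) auto
  moreover have "p s = 1" "p t = 0"
    using unreachable walk.refl[of ?S tail head t] unfolding p_def by auto
  ultimately show False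
    by simp
qed

lemma st_flow_support_contains_short_path:
  assumes f: "f \<in> st_flows V A tail head s t y" and "finite A" "finite V"
    and "\<forall>a\<in>A. tail a \<in> V \<and> head a \<in> V" and "s \<in> V" "t \<in> V" "s \<noteq> t"
    and wt: "\<forall>b. wt b \<ge> 0"
  shows "\<exists>vs es. walk {a\<in>A. f a \<noteq> 0} tail head s t vs es \<and> distinct vs \<and>
           sum_list (map wt es) \<le> (\<Sum>a\<in>{a\<in>A. y a > 0}. \<bar>f a\<bar> * wt a)"
proof -
  let ?S = "{a\<in>A. f a \<noteq> 0}"
  let ?d = "\<lambda>v. walk_dist ?S tail head wt v t"
  obtain vs es where walk: "walk ?S tail head s t vs es"
    using st_flow_support_connected[OF assms(1-7)] by blast
  have "finite ?S"
    using \<open>finite A\<close> by simp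
  from shortest_walk_exists[OF this walk wt]
  obtain vs' es' where shortest: "walk ?S tail head s t vs' es'" "distinct vs'"
    "\<forall>vs es. walk ?S tail head s t vs es \<longrightarrow> sum_list (map wt es') \<le> sum_list (map wt es)"
    by blast
  have "sum_list (map wt es') \<le> ?d s"
    unfolding walk_dist_def using shortest by (intro cInf_greatest) auto
  also have "\<dots> = ?d s - ?d t"
    using walk_dist_refl[OF wt] by simp
  also have "\<dots> \<le> (\<Sum>a\<in>{a\<in>A. y a > 0}. \<bar>f a\<bar> * wt a)"
  proof (rule st_flow_potential_drop_le[OF assms(1-7)])
    show "\<forall>a\<in>A. f a \<noteq> 0 \<longrightarrow> \<bar>?d (tail a) - ?d (head a)\<bar> \<le> wt a"
      by (auto intro: walk_dist_arc[OF wt])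
  qed
  finally show ?thesis
    using shortest(1,2) by (intro exI[of _ vs'] exI[of _ es']) simp
qed

fun walk_flow :: "('a \<Rightarrow> 'v) \<Rightarrow> 'v list \<Rightarrow> 'a list \<Rightarrow> 'a \<Rightarrow> real" where
  "walk_flow tail (u # vs) (a # es) b = (if b = a then (if tail a = u then 1 else -1) else 0) + walk_flow tail vs es b"
| "walk_flow tail _ _ b = 0"

lemma walk_flow_outside: "walk S tail head u w vs es \<Longrightarrow> b \<notin> set es \<Longrightarrow> walk_flow tail vs es b = 0"
  by (induction rule: walk.induct) auto

lemma walk_flow_abs:
  "walk S tail head u w vs es \<Longrightarrow> distinct es \<Longrightarrow> b \<in> set es \<Longrightarrow> \<bar>walk_flow tail vs es b\<bar> = 1"
proof (induction rule: walk.induct)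
  case (step a u v w vs es)
  then show ?case
    by (cases "b = a") (auto simp: walk_flow_outside)
qed auto

lemma walk_flow_net:
  assumes "walk S tail head u w vs es" "finite T" "set es \<subseteq> T"
  shows "(\<Sum>b\<in>T. walk_flow tail vs es b * ((if tail b = x then 1 else 0) - (if head b = x then 1 else 0)))
       = (if u = x then 1 else 0) - (if w = x then (1::real) else 0)"
  using assms
proof (induction rule: walk.induct)
  case (step a u v w vs es)
  let ?net = "\<lambda>b. (if tail b = x then 1 else 0) - (if head b = x then 1 else (0::real))"
  let ?sign = "if tail a = u then 1 else -1::real"
  have "walk_flow tail (u # vs) (a # es) b * ?net b = (if b = a then ?sign * ?net b else 0) + walk_flow tail vs es b * ?net b"
    for b
    by (simp only: walk_flow.simps distrib_right) simp
  then have "(\<Sum>b\<in>T. walk_flow tail (u # vs) (a # es) b * ?net b)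
      = (\<Sum>b\<in>T. (if b = a then ?sign * ?net b else 0)) + (\<Sum>b\<in>T. walk_flow tail vs es b * ?net b)"
    by (simp only: sum.distrib)
  also have "(\<Sum>b\<in>T. (if b = a then ?sign * ?net b else 0)) = ?sign * ?net a"
    using step by (simp add: sum.delta')
  also have "?sign * ?net a = (if u = x then 1 else 0) - (if v = x then 1 else 0)"
    using step(2) by (auto simp: joins_def)
  finally show ?case
    using step by simp
qed simp

lemma walk_flow_in_st_flows:
  assumes walk: "walk S tail head s t vs es" and "s \<noteq> t" and supp: "{a\<in>A. y a > 0} = set es"
  shows "walk_flow tail vs es \<in> st_flows V A tail head s t y"
  unfolding st_flows_def supp
proof (intro CollectI conjI allI impI ballI)
  fix a assume "a \<notin> set es"
  then show "walk_flow tail vs es a = 0"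
    using walk_flow_outside[OF walk] by simp
next
  fix v
  let ?g = "walk_flow tail vs es"
  have "{a\<in>A. y a > 0 \<and> tail a = v} = {a\<in>set es. tail a = v}" "{a\<in>A. y a > 0 \<and> head a = v} = {a\<in>set es. head a = v}"
    using supp by auto
  moreover have "(\<Sum>a\<in>{a\<in>set es. tail a = v}. ?g a) - (\<Sum>a\<in>{a\<in>set es. head a = v}. ?g a)
      = (\<Sum>b\<in>set es. ?g b * ((if tail b = v then 1 else 0) - (if head b = v then 1 else 0)))"
    unfolding sum.inter_filter[OF finite_set] sum_subtractf[symmetric] by (intro sum.cong) auto
  ultimately show "(\<Sum>a\<in>{a\<in>A. y a > 0 \<and> tail a = v}. ?g a) - (\<Sum>a\<in>{a\<in>A. y a > 0 \<and> head a = v}. ?g a)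
      = (if v = s then 1 else if v = t then -1 else 0)"
    using walk_flow_net[OF walk finite_set subset_refl, of v] \<open>s \<noteq> t\<close> by auto
qed

lemma eff_resistance_le_walk:
  assumes walk: "walk S tail head s t vs es" and "distinct es" "s \<noteq> t" and supp: "{a\<in>A. y a > 0} = set es"
  shows "eff_resistance V A tail head s t r y \<le> ereal (\<Sum>a\<in>set es. 1 / y a powr r)"
proof -
  have "walk_flow tail vs es \<in> st_flows V A tail head s t y"
    by (rule walk_flow_in_st_flows[OF walk \<open>s \<noteq> t\<close> supp])
  then have "eff_resistance V A tail head s t r y \<le> ereal (flow_energy A r y (walk_flow tail vs es))"
    by (rule eff_resistance_le_flow_energy)
  also have "flow_energy A r y (walk_flow tail vs es) = (\<Sum>a\<in>set es. 1 / y a powr r)"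
    unfolding flow_energy_def supp using walk_flow_abs[OF walk \<open>distinct es\<close>] by simp
  finally show ?thesis .
qed

lemma walk_undirected_st_path:
  assumes "walk S tail head s t vs es" "distinct vs" "S \<subseteq> A"
  shows "undirected_st_path A tail head s t (set es)"
  unfolding undirected_st_path_def
proof (intro exI[of _ vs] exI[of _ es] conjI)
  show "length vs = Suc (length es)" "hd vs = s" "last vs = t" "distinct vs" "set es \<subseteq> A" "set es = set es"
    using walk_nth[OF assms(1)] assms(2,3) by auto
  show "\<forall>i<length es. (tail (es ! i) = vs ! i \<and> head (es ! i) = vs ! Suc i) \<or>
                      (head (es ! i) = vs ! i \<and> tail (es ! i) = vs ! Suc i)"
    using walk_nth[OF assms(1)] unfolding joins_def by blast
qed

lemma st_flows_vanish_off_conductance: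
  "f \<in> st_flows V A tail head s t y \<Longrightarrow> {a\<in>A. f a \<noteq> 0} \<subseteq> {a\<in>A. y a > 0}"
  unfolding st_flows_def by auto

lemma st_flow_path_capacities:
  assumes f: "f \<in> st_flows V A tail head s t y" and energy: "flow_energy A r y f \<le> B"
    and "finite A" "finite V" "\<forall>a\<in>A. tail a \<in> V \<and> head a \<in> V" "s \<in> V" "t \<in> V" "s \<noteq> t"
    and "r > 0" and nonneg: "\<forall>a\<in>A. c a \<ge> 0 \<and> y a \<ge> 0"
  shows "\<exists>vs es z. walk {a\<in>A. f a \<noteq> 0} tail head s t vs es \<and> distinct vs \<and> set es \<subseteq> {a\<in>A. y a > 0} \<and>
           (\<forall>a\<in>set es. z a > 0) \<and> (\<Sum>a\<in>set es. 1 / z a powr r) \<le> B \<and>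
           (\<Sum>a\<in>set es. c a * z a) \<le> (\<Sum>a\<in>A. c a * y a)"
proof -
  define wt where "wt a = c a powr (r/(r+1))" for a
  obtain vs es where walk: "walk {a\<in>A. f a \<noteq> 0} tail head s t vs es" "distinct vs"
    and short: "sum_list (map wt es) \<le> (\<Sum>a\<in>{a\<in>A. y a > 0}. \<bar>f a\<bar> * wt a)"
    using st_flow_support_contains_short_path[OF f assms(3-8), of wt] by (auto simp: wt_def)
  have on_supp: "set es \<subseteq> {a\<in>A. f a \<noteq> 0}"
    using walk_nth[OF walk(1)] by blast
  have "\<exists>z. (\<forall>a\<in>set es. z a > 0) \<and> (\<Sum>a\<in>set es. 1 / z a powr r) \<le> B \<and>
      (\<Sum>a\<in>set es. c a * z a) \<le> (\<Sum>a\<in>{a\<in>A. y a > 0}. c a * y a)"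
  proof (rule path_capacities_exist[of _ _ r c y "\<lambda>a. \<bar>f a\<bar>" B])
    show "(\<Sum>a\<in>set es. c a powr (r/(r+1))) \<le> (\<Sum>a\<in>{a\<in>A. y a > 0}. \<bar>f a\<bar> * c a powr (r/(r+1)))"
      using short walk_distinct_arcs[OF walk] by (simp add: wt_def sum_list_distinct_conv_sum_set)
  qed (use assms on_supp st_flows_vanish_off_conductance[OF f] in \<open>auto simp: flow_energy_def\<close>)
  moreover have "(\<Sum>a\<in>{a\<in>A. y a > 0}. c a * y a) \<le> (\<Sum>a\<in>A. c a * y a)"
    using \<open>finite A\<close> nonneg by (intro sum_mono2) auto
  ultimately show ?thesis
    using walk on_supp st_flows_vanish_off_conductance[OF f] by (meson order_trans)
qed

lemma ndp_optimal_on_path: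
  assumes opt: "ndp_optimal V A tail head s t r c \<gamma> ybar B x y" and "finite A"
    and nonneg: "\<forall>a\<in>A. c a \<ge> 0 \<and> \<gamma> a \<ge> 0" and "\<forall>a\<in>A. ybar a = \<infinity>"
    and walk: "walk S tail head s t vs es" "distinct vs" "S \<subseteq> A" "s \<noteq> t"
    and on_supp: "set es \<subseteq> {a\<in>A. y a > 0}"
    and z_pos: "\<forall>a\<in>set es. z a > 0" and z_resistance: "(\<Sum>a\<in>set es. 1 / z a powr r) \<le> B"
    and z_cost: "(\<Sum>a\<in>set es. c a * z a) \<le> (\<Sum>a\<in>A. c a * y a)"
  defines "x' \<equiv> \<lambda>a. if a \<in> set es then 1 else 0" and "y' \<equiv> \<lambda>a. if a \<in> set es then z a else 0"
  shows "ndp_optimal V A tail head s t r c \<gamma> ybar B x' y'"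
proof -
  have xy: "\<forall>a\<in>A. (x a = 0 \<or> x a = 1) \<and> y a \<ge> 0 \<and> (y a > 0 \<longrightarrow> x a = 1)"
    using opt unfolding ndp_optimal_def ndp_feasible_def by auto
  have supp: "{a\<in>A. y' a > 0} = set es"
    using on_supp z_pos by (auto simp: y'_def)
  have "eff_resistance V A tail head s t r y' \<le> ereal (\<Sum>a\<in>set es. 1 / y' a powr r)"
    using eff_resistance_le_walk[OF walk(1) walk_distinct_arcs[OF walk(1,2)] walk(4) supp] .
  also have "(\<Sum>a\<in>set es. 1 / y' a powr r) \<le> B"
    using z_resistance by (simp add: y'_def)
  finally have "ndp_feasible V A tail head s t r ybar B x' y'"
    unfolding ndp_feasible_def using assms(4) z_pos by (auto simp: x'_def y'_def less_imp_le)
  moreover have "ndp_cost A c \<gamma> x' y' \<le> ndp_cost A c \<gamma> x y"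
  proof -
    have "ndp_cost A c \<gamma> x' y' = (\<Sum>a\<in>set es. c a * y' a + \<gamma> a * x' a)"
      unfolding ndp_cost_def using on_supp \<open>finite A\<close>
      by (intro sum.mono_neutral_right) (auto simp: x'_def y'_def)
    also have "\<dots> = (\<Sum>a\<in>set es. c a * z a) + (\<Sum>a\<in>set es. \<gamma> a * x a)"
      using on_supp xy by (auto simp: x'_def y'_def sum.distrib intro!: sum.cong)
    also have "(\<Sum>a\<in>set es. \<gamma> a * x a) \<le> (\<Sum>a\<in>A. \<gamma> a * x a)"
      using on_supp \<open>finite A\<close> nonneg xy by (intro sum_mono2) auto
    finally show ?thesis
      using z_cost by (simp add: ndp_cost_def sum.distrib)
  qed
  ultimately show ?thesis
    using opt unfolding ndp_optimal_def by (meson order_trans)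
qed

theorem lemma6:
  fixes V :: "'v set" and A :: "'a set" and tail head :: "'a \<Rightarrow> 'v" and s t :: 'v
    and r B :: real and c \<gamma> :: "'a \<Rightarrow> real" and ybar :: "'a \<Rightarrow> ereal"
  assumes "finite V" and "finite A"
    and "\<forall>a\<in>A. tail a \<in> V \<and> head a \<in> V"
    and "weakly_connected V A tail head"
    and "s \<in> V" and "t \<in> V" and "s \<noteq> t"
    and "r \<ge> 1" and "B > 0"
    and "\<forall>a\<in>A. c a \<ge> 0 \<and> \<gamma> a \<ge> 0"
    and "\<forall>a\<in>A. ybar a = \<infinity>"
    and "\<exists>x y. ndp_optimal V A tail head s t r c \<gamma> ybar B x y"
  shows "\<exists>x y P. ndp_optimal V A tail head s t r c \<gamma> ybar B x y \<and> undirected_st_path A tail head s t P \<and>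
           (\<forall>a\<in>A - P. x a = 0 \<and> y a = 0)"
proof -
  obtain x y where opt: "ndp_optimal V A tail head s t r c \<gamma> ybar B x y"
    using assms(12) by blast
  then have resistance: "eff_resistance V A tail head s t r y \<le> ereal B" and y_nonneg: "\<forall>a\<in>A. y a \<ge> 0"
    unfolding ndp_optimal_def ndp_feasible_def by auto
  have "\<exists>f\<in>st_flows V A tail head s t y. flow_energy A r y f \<le> B"
    using \<open>r \<ge> 1\<close> by (intro flow_energy_le_of_eff_resistance_le[OF assms(2) _ resistance]) simp
  then obtain f where f: "f \<in> st_flows V A tail head s t y" and "flow_energy A r y f \<le> B"
    by blast
  then obtain vs es z where walk: "walk {a\<in>A. f a \<noteq> 0} tail head s t vs es" "distinct vs"
    and path: "set es \<subseteq> {a\<in>A. y a > 0}" "\<forall>a\<in>set es. z a > 0" "(\<Sum>a\<in>set es. 1 / z a powr r) \<le> B"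
      "(\<Sum>a\<in>set es. c a * z a) \<le> (\<Sum>a\<in>A. c a * y a)"
    using st_flow_path_capacities[OF f _ assms(2,1,3,5-7), of r B c] assms(8,10) y_nonneg by auto
  have "ndp_optimal V A tail head s t r c \<gamma> ybar B
      (\<lambda>a. if a \<in> set es then 1 else 0) (\<lambda>a. if a \<in> set es then z a else 0)"
    by (rule ndp_optimal_on_path[OF opt assms(2,10,11) walk _ assms(7) path]) auto
  moreover have "undirected_st_path A tail head s t (set es)"
    by (rule walk_undirected_st_path[OF walk]) auto
  ultimately show ?thesis
    by (intro exI[of _ "set es"] exI) auto
qed

end
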